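(* Let $1\le k\le n$, and consider a storage network with node set $\mathcal{N}$ and RTT function $\tau$. (i) If $\mathcal{C}$ is an uncoded storage scheme that is admissible on some nearest-neighbor graph $\mathcal{G}_{k-1}$, then \[ L_{avg}(\mathcal{C})=\frac{1}{kn}\sum_{i\in\mathcal{N}}\sum_{j=0}^{k-1}\lambda_j^{(i)}. \] (ii) Conversely, if an uncoded storage scheme $\mathcal{C}$ satisfies $L_{max}^{(i)}(\mathcal{C})=\lambda_{k-1}^{(i)}$ for all $i\in\mathcal{N}$ and $L_{avg}(\mathcal{C})=\frac{1}{kn}\sum_{i\in\mathcal{N}}\sum_{j=0}^{k-1}\lambda_j^{(i)}$, then $\mathcal{C}$ is admissible on some nearest-neighbor graph $\mathcal{G}_{k-1}$.
   Context: A storage network consists of $n$ nodes $\mathcal{N}=\{1,\dots,n\}$ and a round-trip-time (RTT) function $\tau:\mathcal{N}\times\mathcal{N}\to\mathbb{R}_{\ge 0}$ with $\tau(i,j)=\tau(j,i)$ and $\tau(i,i)=0$. There are $k\le n$ information files $W_1,\dots,W_k$. An uncoded storage scheme stores at each node $i$ exactly one file, $X_i=W_{\sigma(i)}$, for a map $\sigma:\mathcal{N}\to[k]$ (which must be surjective so that all files are stored). File $W_j$ is decodable from $S\subseteq\mathcal{N}$ iff some $t\in S$ has $\sigma(t)=j$. The latency $l_j^{(i)}=\min\{L\ge0: W_j$ decodable from $\{t:\tau(t,i)\le L\}\}$; $L_{max}^{(i)}(\mathcal{C})=\max_{j\in[k]}l_j^{(i)}$ and $L_{avg}(\mathcal{C})=\frac{1}{kn}\sum_{i\in\mathcal{N}}\sum_{j\in[k]}l_j^{(i)}$.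 For node $i$, $\lambda_0^{(i)}\le\dots\le\lambda_{n-1}^{(i)}$ is the sorted list of $\{\tau(j,i):j\in\mathcal{N}\}$ ($\lambda_0^{(i)}=0$). A nearest-neighbor graph $\mathcal{G}_{k-1}$ is a directed graph on $\mathcal{N}$ in which each node $i$ has incoming edges from exactly $k-1$ other nodes whose RTTs to $i$ are the $k-1$ smallest values $\lambda_1^{(i)},\dots,\lambda_{k-1}^{(i)}$ (ties broken arbitrarily); these are the neighbors of $i$. A scheme is admissible on a directed graph $\mathcal{D}$ on $\mathcal{N}$ if for every node $i$ and every $j\in[k]$, $W_j$ is decodable from $\{i\}$ together with the nodes having an edge into $i$ in $\mathcal{D}$. *)

theory Defs
  imports Complex_Main "HOL-Library.Multiset"
begin

definition nodes :: "nat \<Rightarrow> nat set" where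
  "nodes n = {1..n}"

definition rtt_function :: "nat \<Rightarrow> (nat \<Rightarrow> nat \<Rightarrow> real) \<Rightarrow> bool" where
  "rtt_function n tau \<longleftrightarrow>
     (\<forall>i\<in>nodes n. \<forall>j\<in>nodes n. tau i j \<ge> 0 \<and> tau i j = tau j i) \<and>
     (\<forall>i\<in>nodes n. tau i i = 0)"

text \<open>Uncoded storage scheme: node i stores file sigma i; all k files are stored.\<close>
definition uncoded_scheme :: "nat \<Rightarrow> nat \<Rightarrow> (nat \<Rightarrow> nat) \<Rightarrow> bool" where
  "uncoded_scheme n k sigma \<longleftrightarrow> sigma ` nodes n = {1..k}"

definition decodable :: "(nat \<Rightarrow> nat) \<Rightarrow> nat set \<Rightarrow> nat \<Rightarrow> bool" where
  "decodable sigma S j \<longleftrightarrow> (\<exists>t\<in>S. sigma t = j)"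

definition latency :: "nat \<Rightarrow> (nat \<Rightarrow> nat \<Rightarrow> real) \<Rightarrow> (nat \<Rightarrow> nat) \<Rightarrow> nat \<Rightarrow> nat \<Rightarrow> real" where
  "latency n tau sigma i j =
     (LEAST L. L \<ge> 0 \<and> decodable sigma {t \<in> nodes n. tau t i \<le> L} j)"

definition L_max :: "nat \<Rightarrow> nat \<Rightarrow> (nat \<Rightarrow> nat \<Rightarrow> real) \<Rightarrow> (nat \<Rightarrow> nat) \<Rightarrow> nat \<Rightarrow> real" where
  "L_max n k tau sigma i = Max ((\<lambda>j. latency n tau sigma i j) ` {1..k})"

definition L_avg :: "nat \<Rightarrow> nat \<Rightarrow> (nat \<Rightarrow> nat \<Rightarrow> real) \<Rightarrow> (nat \<Rightarrow> nat) \<Rightarrow> real" where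
  "L_avg n k tau sigma =
     (1 / (real k * real n)) * (\<Sum>i\<in>nodes n. \<Sum>j\<in>{1..k}. latency n tau sigma i j)"

text \<open>\<open>lambda_seq n tau i m\<close> is the m-th smallest (0-based) of the values tau j i, j in nodes.\<close>
definition lambda_seq :: "nat \<Rightarrow> (nat \<Rightarrow> nat \<Rightarrow> real) \<Rightarrow> nat \<Rightarrow> nat \<Rightarrow> real" where
  "lambda_seq n tau i m = sort (map (\<lambda>j. tau j i) [1..<n+1]) ! m"

text \<open>A directed graph on the nodes is given by its in-neighbourhoods: \<open>G i\<close> is the set
  of nodes having an edge into i.\<close>
definition nn_graph :: "nat \<Rightarrow> nat \<Rightarrow> (nat \<Rightarrow> nat \<Rightarrow> real) \<Rightarrow> (nat \<Rightarrow> nat set) \<Rightarrow> bool" where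
  "nn_graph n k tau G \<longleftrightarrow>
     (\<forall>i\<in>nodes n. G i \<subseteq> nodes n - {i} \<and> card (G i) = k - 1 \<and>
        image_mset (\<lambda>t. tau t i) (mset_set (G i)) = mset (map (lambda_seq n tau i) [1..<k]))"

definition admissible :: "nat \<Rightarrow> nat \<Rightarrow> (nat \<Rightarrow> nat) \<Rightarrow> (nat \<Rightarrow> nat set) \<Rightarrow> bool" where
  "admissible n k sigma G \<longleftrightarrow>
     (\<forall>i\<in>nodes n. \<forall>j\<in>{1..k}. decodable sigma ({i} \<union> G i) j)"

end

theory Submission
  imports Defs
begin

(* Fix a node i and serve every file from a nearest node storing it, taking i itself for
   its own file. These k holders are distinct, so the latencies at i add up to the RTTs of
   k distinct nodes: at least lambda_0 + ... + lambda_(k-1), with equality exactly when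
   their RTTs form the multiset of the k smallest ones. If the scheme is admissible on a
   nearest-neighbour graph, i and its k-1 neighbours hold all files, which gives the reverse
   inequality and hence (i). Conversely, equal averages force equality at every node, and
   the holders other than i then serve as the in-neighbours of a nearest-neighbour graph on
   which the scheme is admissible. *)

lemma submset_Cons_obtain_ge_head:
  fixes x :: "'a::linorder"
  assumes "sorted (x # xs)" and "N \<subseteq># mset (x # xs)" and "N \<noteq> {#}"
  obtains y where "y \<in># N" and "x \<le> y" and "N - {#y#} \<subseteq># mset xs"
proof (cases "x \<in># N")
  case True
  have "N - {#x#} \<subseteq># mset xs"
    using assms(2) by (simp add: subset_eq_diff_conv)
  with True show ?thesis using that by blast
next
  case False
  then have N: "N \<subseteq># mset xs"
    using assms(2) by (simp add: inter_add_left1 subset_mset.inf.absorb_iff2)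
  obtain y where y: "y \<in># N" using assms(3) by blast
  then have "y \<in> set xs" using N by (metis mset_subset_eqD set_mset_mset)
  then have "x \<le> y" using assms(1) by simp
  moreover have "N - {#y#} \<subseteq># mset xs"
    using N by (meson diff_subset_eq_self subset_mset.order_trans)
  ultimately show ?thesis using y that by blast
qed

lemma sum_list_take_le_sum_mset:
  fixes xs :: "'a::{linordered_cancel_ab_semigroup_add, comm_monoid_add} list"
  assumes "sorted xs" and "N \<subseteq># mset xs" and "size N = k"
  shows "sum_list (take k xs) \<le> sum_mset N"
  using assms
proof (induction xs arbitrary: N k)
  case Nil
  then show ?case by simp
next
  case (Cons x xs)
  show ?case
  proof (cases k)
    case 0
    then show ?thesis using Cons.prems(3) by simp
  next
    case (Suc k')
    then have "N \<noteq> {#}" using Cons.prems(3) by auto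
    with Cons.prems(1,2) obtain y where y: "y \<in># N" "x \<le> y" "N - {#y#} \<subseteq># mset xs"
      by (rule submset_Cons_obtain_ge_head)
    have sx: "sorted xs" using Cons.prems(1) by simp
    have size: "size (N - {#y#}) = k'" using Cons.prems(3) y(1) Suc by (simp add: size_Diff_singleton)
    have "x + sum_list (take k' xs) \<le> y + sum_mset (N - {#y#})"
      using y(2) Cons.IH[OF sx y(3) size] by (rule add_mono)
    also have "\<dots> = sum_mset N" using y(1) by (simp add: sum_mset.remove)
    finally show ?thesis using Suc by simp
  qed
qed

lemma sum_mset_eq_sum_list_take_imp_eq:
  fixes xs :: "'a::{linordered_cancel_ab_semigroup_add, comm_monoid_add} list"
  assumes "sorted xs" and "N \<subseteq># mset xs" and "size N = k"
    and "sum_mset N = sum_list (take k xs)"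
  shows "N = mset (take k xs)"
  using assms
proof (induction xs arbitrary: N k)
  case Nil
  then show ?case by simp
next
  case (Cons x xs)
  show ?case
  proof (cases k)
    case 0
    then show ?thesis using Cons.prems(3) by simp
  next
    case (Suc k')
    then have "N \<noteq> {#}" using Cons.prems(3) by auto
    with Cons.prems(1,2) obtain y where y: "y \<in># N" "x \<le> y" "N - {#y#} \<subseteq># mset xs"
      by (rule submset_Cons_obtain_ge_head)
    have sx: "sorted xs" using Cons.prems(1) by simp
    have size: "size (N - {#y#}) = k'" using Cons.prems(3) y(1) Suc by (simp add: size_Diff_singleton)
    have N: "N = add_mset y (N - {#y#})" using y(1) by simp
    have le: "sum_list (take k' xs) \<le> sum_mset (N - {#y#})"
      by (rule sum_list_take_le_sum_mset[OF sx y(3) size])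
    have eq: "y + sum_mset (N - {#y#}) = x + sum_list (take k' xs)"
      using Cons.prems(4) Suc by (subst (asm) N) simp
    have "y = x"
    proof (rule ccontr)
      assume "y \<noteq> x"
      then have "x + sum_list (take k' xs) < y + sum_mset (N - {#y#})"
        using y(2) le by (simp add: add_less_le_mono)
      with eq show False by simp
    qed
    with eq have "sum_mset (N - {#y#}) = sum_list (take k' xs)" by simp
    then have "N - {#y#} = mset (take k' xs)"
      using Cons.IH[OF sx y(3) size] by blast
    then show ?thesis using N \<open>y = x\<close> Suc by simp
  qed
qed

definition sorted_rtts :: "nat \<Rightarrow> (nat \<Rightarrow> nat \<Rightarrow> real) \<Rightarrow> nat \<Rightarrow> real list" where
  "sorted_rtts n tau i = sort (map (\<lambda>j. tau j i) [1..<n+1])"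

lemma lambda_seq_eq_nth_sorted_rtts: "lambda_seq n tau i m = sorted_rtts n tau i ! m"
  by (simp add: lambda_seq_def sorted_rtts_def)

lemma length_sorted_rtts [simp]: "length (sorted_rtts n tau i) = n"
  by (simp add: sorted_rtts_def)

lemma sorted_sorted_rtts: "sorted (sorted_rtts n tau i)"
  by (simp add: sorted_rtts_def)

lemma atLeastLessThan_Suc_eq_nodes: "{1..<n+1} = nodes n"
  by (auto simp: nodes_def)

lemma mset_sorted_rtts:
  "mset (sorted_rtts n tau i) = image_mset (\<lambda>t. tau t i) (mset_set (nodes n))"
  by (simp only: sorted_rtts_def mset_sort mset_map mset_upt atLeastLessThan_Suc_eq_nodes)

lemma set_sorted_rtts: "set (sorted_rtts n tau i) = (\<lambda>t. tau t i) ` nodes n"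
  by (simp only: sorted_rtts_def set_sort set_map set_upt atLeastLessThan_Suc_eq_nodes)

lemma lambda_seq_0:
  assumes "rtt_function n tau" and "i \<in> nodes n"
  shows "lambda_seq n tau i 0 = 0"
proof -
  let ?xs = "sorted_rtts n tau i"
  have nonneg: "\<forall>x\<in>set ?xs. 0 \<le> x" and "0 \<in> set ?xs"
    using assms by (auto simp: set_sorted_rtts rtt_function_def)
  then obtain m where m: "m < n" "?xs ! m = 0" by (metis in_set_conv_nth length_sorted_rtts)
  then have "?xs ! 0 \<le> 0"
    using sorted_nth_mono[OF sorted_sorted_rtts[of n tau i], of 0 m] by simp
  moreover have "0 \<le> ?xs ! 0" using nonneg m(1) by (simp add: nth_mem)
  ultimately show ?thesis by (simp add: lambda_seq_eq_nth_sorted_rtts)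
qed

lemma take_sorted_rtts:
  assumes "k \<le> n"
  shows "take k (sorted_rtts n tau i) = map (lambda_seq n tau i) [0..<k]"
  using assms by (intro nth_equalityI) (simp_all add: lambda_seq_eq_nth_sorted_rtts)

lemma sum_lambda_seq_eq_sum_list_take:
  assumes "1 \<le> k" and "k \<le> n"
  shows "(\<Sum>j\<in>{0..k-1}. lambda_seq n tau i j) = sum_list (take k (sorted_rtts n tau i))"
proof -
  have "{0..k-1} = {0..<k}" using assms(1) by auto
  then show ?thesis
    using take_sorted_rtts[OF assms(2)]
    by (simp add: sum_list_map_eq_sum_count2 interv_sum_list_conv_sum_set_nat)
qed

lemma take_sorted_rtts_eq_Cons_0:
  assumes "rtt_function n tau" and "i \<in> nodes n" and "1 \<le> k" and "k \<le> n"
  shows "take k (sorted_rtts n tau i) = 0 # map (lambda_seq n tau i) [1..<k]"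
  using take_sorted_rtts[OF assms(4)] lambda_seq_0[OF assms(1,2)] assms(3)
  by (simp add: upt_conv_Cons)

lemma rtts_of_nodes_subseteq_sorted_rtts:
  assumes "S \<subseteq> nodes n"
  shows "image_mset (\<lambda>t. tau t i) (mset_set S) \<subseteq># mset (sorted_rtts n tau i)"
  unfolding mset_sorted_rtts
  by (intro image_mset_subseteq_mono subset_imp_msubset_mset_set assms) (simp add: nodes_def)

lemma sum_list_take_sorted_rtts_le:
  assumes "S \<subseteq> nodes n" and "card S = k"
  shows "sum_list (take k (sorted_rtts n tau i)) \<le> (\<Sum>t\<in>S. tau t i)"
  using sum_list_take_le_sum_mset[OF sorted_sorted_rtts rtts_of_nodes_subseteq_sorted_rtts[OF assms(1)]]
    assms(2) by (simp add: sum_unfold_sum_mset)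

lemma sum_rtts_eq_sum_list_take_imp_mset_eq:
  assumes "S \<subseteq> nodes n" and "card S = k"
    and "(\<Sum>t\<in>S. tau t i) = sum_list (take k (sorted_rtts n tau i))"
  shows "image_mset (\<lambda>t. tau t i) (mset_set S) = mset (take k (sorted_rtts n tau i))"
  using sum_mset_eq_sum_list_take_imp_eq[OF sorted_sorted_rtts rtts_of_nodes_subseteq_sorted_rtts[OF assms(1)]]
    assms(2,3) by (simp add: sum_unfold_sum_mset)

lemma nn_graph_iff:
  assumes "rtt_function n tau" and "1 \<le> k" and "k \<le> n"
  shows "nn_graph n k tau G \<longleftrightarrow>
    (\<forall>i\<in>nodes n. G i \<subseteq> nodes n - {i} \<and>
       image_mset (\<lambda>t. tau t i) (mset_set (insert i (G i))) = mset (take k (sorted_rtts n tau i)))"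
  unfolding nn_graph_def
proof (intro ball_cong conj_cong refl)
  fix i assume i: "i \<in> nodes n" and G: "G i \<subseteq> nodes n - {i}"
  let ?M = "image_mset (\<lambda>t. tau t i) (mset_set (G i))"
  let ?L = "mset (map (lambda_seq n tau i) [1..<k])"
  have "finite (G i)" and "i \<notin> G i" using G finite_subset by (auto simp: nodes_def)
  then have "image_mset (\<lambda>t. tau t i) (mset_set (insert i (G i))) = add_mset 0 ?M"
    using assms(1) i by (simp add: rtt_function_def)
  moreover have "mset (take k (sorted_rtts n tau i)) = add_mset 0 ?L"
    using take_sorted_rtts_eq_Cons_0[OF assms(1) i assms(2,3)] by simp
  moreover have "?M = ?L \<Longrightarrow> card (G i) = k - 1"
    by (metis length_map length_upt mset_map size_image_mset size_mset size_mset_set)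
  ultimately show "(card (G i) = k - 1 \<and> ?M = ?L) \<longleftrightarrow>
      image_mset (\<lambda>t. tau t i) (mset_set (insert i (G i))) = mset (take k (sorted_rtts n tau i))"
    by auto
qed

lemma latency_eq_nearest_holder:
  assumes "rtt_function n tau" and "i \<in> nodes n" and "t \<in> nodes n" and "sigma t = j"
    and nearest: "\<And>t'. t' \<in> nodes n \<Longrightarrow> sigma t' = j \<Longrightarrow> tau t i \<le> tau t' i"
  shows "latency n tau sigma i j = tau t i"
  unfolding latency_def
proof (rule Least_equality)
  show "0 \<le> tau t i \<and> decodable sigma {t' \<in> nodes n. tau t' i \<le> tau t i} j"
    using assms(1-4) by (auto simp: rtt_function_def decodable_def)
next
  fix L assume "0 \<le> L \<and> decodable sigma {t' \<in> nodes n. tau t' i \<le> L} j"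
  then obtain t' where "t' \<in> nodes n" "sigma t' = j" "tau t' i \<le> L"
    by (auto simp: decodable_def)
  then show "tau t i \<le> L" using nearest by force
qed

lemma nearest_holder_exists:
  fixes tau :: "nat \<Rightarrow> nat \<Rightarrow> 'a::linorder"
  assumes "j \<in> sigma ` nodes n"
  obtains t where "t \<in> nodes n" and "sigma t = j"
    and "\<And>t'. t' \<in> nodes n \<Longrightarrow> sigma t' = j \<Longrightarrow> tau t i \<le> tau t' i"
proof -
  let ?H = "{t \<in> nodes n. sigma t = j}"
  have fin: "finite ?H" and ne: "?H \<noteq> {}" using assms by (auto simp: nodes_def)
  let ?t = "arg_min_on (\<lambda>t. tau t i) ?H"
  have "?t \<in> ?H" using arg_min_if_finite(1)[OF fin ne] .
  moreover have "tau ?t i \<le> tau t' i" if "t' \<in> ?H" for t'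
    using arg_min_least[OF fin ne that] .
  ultimately show ?thesis using that by blast
qed

lemma latency_le:
  assumes "rtt_function n tau" and "i \<in> nodes n" and "t \<in> nodes n"
  shows "latency n tau sigma i (sigma t) \<le> tau t i"
proof -
  have "sigma t \<in> sigma ` nodes n" using assms(3) by blast
  then obtain t0 where t0: "t0 \<in> nodes n" "sigma t0 = sigma t"
    and nearest: "\<And>t'. t' \<in> nodes n \<Longrightarrow> sigma t' = sigma t \<Longrightarrow> tau t0 i \<le> tau t' i"
    by (rule nearest_holder_exists[where tau = tau and i = i]) blast
  have "latency n tau sigma i (sigma t) = tau t0 i"
    using latency_eq_nearest_holder[where sigma = sigma, OF assms(1,2) t0 nearest] .
  also have "\<dots> \<le> tau t i" using nearest assms(3) by blast
  finally show ?thesis .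
qed

lemma latency_own_file:
  assumes "rtt_function n tau" and "i \<in> nodes n"
  shows "latency n tau sigma i (sigma i) = 0"
proof -
  have "latency n tau sigma i (sigma i) = tau i i"
    by (rule latency_eq_nearest_holder) (use assms in \<open>auto simp: rtt_function_def\<close>)
  then show ?thesis using assms by (simp add: rtt_function_def)
qed

lemma sum_latency_le_sum_rtts:
  assumes "rtt_function n tau" and "i \<in> nodes n"
    and "S \<subseteq> nodes n" and "bij_betw sigma S {1..k}"
  shows "(\<Sum>j\<in>{1..k}. latency n tau sigma i j) \<le> (\<Sum>t\<in>S. tau t i)"
proof -
  have "(\<Sum>j\<in>{1..k}. latency n tau sigma i j) = (\<Sum>t\<in>S. latency n tau sigma i (sigma t))"
    by (rule sum.reindex_bij_betw[OF assms(4), symmetric])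
  also have "\<dots> \<le> (\<Sum>t\<in>S. tau t i)"
    using latency_le[OF assms(1,2)] assms(3) by (intro sum_mono) blast
  finally show ?thesis .
qed

lemma nearest_holders:
  assumes "rtt_function n tau" and "uncoded_scheme n k sigma" and "i \<in> nodes n"
  obtains s where "\<forall>j\<in>{1..k}.
      s j \<in> nodes n \<and> sigma (s j) = j \<and> latency n tau sigma i j = tau (s j) i"
    and "s (sigma i) = i"
proof -
  have files: "{1..k} = sigma ` nodes n" using assms(2) by (simp add: uncoded_scheme_def)
  have "\<exists>t. t \<in> nodes n \<and> sigma t = j \<and> latency n tau sigma i j = tau t i \<and>
      (j = sigma i \<longrightarrow> t = i)"
    if "j \<in> {1..k}" for j
  proof (cases "j = sigma i")
    case True
    have "latency n tau sigma i j = tau i i"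
      using True latency_own_file[OF assms(1,3)] assms(1,3) by (simp add: rtt_function_def)
    with True assms(3) show ?thesis by blast
  next
    case False
    have "j \<in> sigma ` nodes n" using that unfolding files .
    then obtain t where t: "t \<in> nodes n" "sigma t = j"
      and nearest: "\<And>t'. t' \<in> nodes n \<Longrightarrow> sigma t' = j \<Longrightarrow> tau t i \<le> tau t' i"
      by (rule nearest_holder_exists[where tau = tau and i = i]) blast
    have "latency n tau sigma i j = tau t i"
      using latency_eq_nearest_holder[where sigma = sigma, OF assms(1,3) t nearest] .
    with t False show ?thesis by blast
  qed
  then have "\<forall>j\<in>{1..k}. \<exists>t. t \<in> nodes n \<and> sigma t = j \<and>
      latency n tau sigma i j = tau t i \<and> (j = sigma i \<longrightarrow> t = i)"
    by blast
  then obtain s where s: "\<forall>j\<in>{1..k}.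
      s j \<in> nodes n \<and> sigma (s j) = j \<and> latency n tau sigma i j = tau (s j) i \<and>
      (j = sigma i \<longrightarrow> s j = i)"
    by (rule bchoice[THEN exE])
  moreover have "sigma i \<in> {1..k}" using files assms(3) by blast
  ultimately show ?thesis using that by blast
qed

lemma nearest_holder_set:
  assumes "rtt_function n tau" and "uncoded_scheme n k sigma" and "i \<in> nodes n"
  obtains S where "S \<subseteq> nodes n" and "i \<in> S" and "bij_betw sigma S {1..k}"
    and "(\<Sum>j\<in>{1..k}. latency n tau sigma i j) = (\<Sum>t\<in>S. tau t i)"
proof -
  obtain s where s: "\<forall>j\<in>{1..k}.
      s j \<in> nodes n \<and> sigma (s j) = j \<and> latency n tau sigma i j = tau (s j) i"
    and s_i: "s (sigma i) = i"
    by (rule nearest_holders[OF assms])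
  have "sigma i \<in> {1..k}" using assms(2,3) by (auto simp: uncoded_scheme_def)
  then have "i \<in> s ` {1..k}" using s_i by (metis imageI)
  moreover have inj: "inj_on s {1..k}" using s by (intro inj_on_inverseI[where g = sigma]) blast
  moreover have "bij_betw sigma (s ` {1..k}) {1..k}"
    using s by (intro bij_betw_byWitness[where f' = s]) auto
  moreover have "(\<Sum>j\<in>{1..k}. latency n tau sigma i j) = (\<Sum>t\<in>s ` {1..k}. tau t i)"
    using s sum.reindex[OF inj, of "\<lambda>t. tau t i"] by simp
  moreover have "s ` {1..k} \<subseteq> nodes n" using s by blast
  ultimately show ?thesis using that by blast
qed

lemma sum_list_take_sorted_rtts_le_sum_latency:
  assumes "rtt_function n tau" and "uncoded_scheme n k sigma" and "i \<in> nodes n"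
  shows "sum_list (take k (sorted_rtts n tau i)) \<le> (\<Sum>j\<in>{1..k}. latency n tau sigma i j)"
proof -
  obtain S where S: "S \<subseteq> nodes n" and bij: "bij_betw sigma S {1..k}"
    and "(\<Sum>j\<in>{1..k}. latency n tau sigma i j) = (\<Sum>t\<in>S. tau t i)"
    by (rule nearest_holder_set[OF assms])
  moreover have "card S = k" using bij_betw_same_card[OF bij] by simp
  ultimately show ?thesis using sum_list_take_sorted_rtts_le[OF S] by simp
qed

lemma sum_latency_eq_if_admissible_nn_graph:
  assumes rtt: "rtt_function n tau" and unc: "uncoded_scheme n k sigma"
    and k: "1 \<le> k" "k \<le> n"
    and G: "nn_graph n k tau G" and adm: "admissible n k sigma G" and i: "i \<in> nodes n"
  shows "(\<Sum>j\<in>{1..k}. latency n tau sigma i j) = sum_list (take k (sorted_rtts n tau i))"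
proof (rule antisym)
  let ?S = "insert i (G i)"
  have "G i \<subseteq> nodes n - {i}"
    and rtts: "image_mset (\<lambda>t. tau t i) (mset_set ?S) = mset (take k (sorted_rtts n tau i))"
    using nn_graph_iff[OF rtt k, THEN iffD1, OF G] i by blast+
  then have S: "?S \<subseteq> nodes n" using i by blast
  then have "finite ?S" by (rule finite_subset) (simp add: nodes_def)
  have card: "card ?S = k"
    using arg_cong[OF rtts, of size] k(2) by simp
  have "sigma ` ?S \<subseteq> {1..k}" using S unc by (auto simp: uncoded_scheme_def)
  moreover have "{1..k} \<subseteq> sigma ` ?S"
    using adm i by (force simp: admissible_def decodable_def)
  ultimately have image: "sigma ` ?S = {1..k}" by (rule subset_antisym)
  then have "inj_on sigma ?S"
    using card by (intro eq_card_imp_inj_on \<open>finite ?S\<close>) simp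
  with image have "bij_betw sigma ?S {1..k}" by (simp add: bij_betw_def)
  then have "(\<Sum>j\<in>{1..k}. latency n tau sigma i j) \<le> (\<Sum>t\<in>?S. tau t i)"
    by (rule sum_latency_le_sum_rtts[OF rtt i S])
  also have "\<dots> = sum_list (take k (sorted_rtts n tau i))"
    using arg_cong[OF rtts, of sum_mset] by (simp add: sum_unfold_sum_mset sum_mset_sum_list)
  finally show "(\<Sum>j\<in>{1..k}. latency n tau sigma i j) \<le> sum_list (take k (sorted_rtts n tau i))" .
  show "sum_list (take k (sorted_rtts n tau i)) \<le> (\<Sum>j\<in>{1..k}. latency n tau sigma i j)"
    using sum_list_take_sorted_rtts_le_sum_latency[OF rtt unc i] .
qed

lemma admissible_nn_graph_if_sum_latency_eq:
  assumes rtt: "rtt_function n tau" and unc: "uncoded_scheme n k sigma"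
    and k: "1 \<le> k" "k \<le> n"
    and opt: "\<And>i. i \<in> nodes n \<Longrightarrow>
      (\<Sum>j\<in>{1..k}. latency n tau sigma i j) = sum_list (take k (sorted_rtts n tau i))"
  shows "\<exists>G. nn_graph n k tau G \<and> admissible n k sigma G"
proof -
  have "\<exists>S. S \<subseteq> nodes n \<and> i \<in> S \<and> sigma ` S = {1..k} \<and>
      image_mset (\<lambda>t. tau t i) (mset_set S) = mset (take k (sorted_rtts n tau i))"
    if i: "i \<in> nodes n" for i
  proof -
    obtain S where S: "S \<subseteq> nodes n" "i \<in> S" and bij: "bij_betw sigma S {1..k}"
      and "(\<Sum>j\<in>{1..k}. latency n tau sigma i j) = (\<Sum>t\<in>S. tau t i)"
      by (rule nearest_holder_set[OF rtt unc i])
    then have "(\<Sum>t\<in>S. tau t i) = sum_list (take k (sorted_rtts n tau i))"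
      using opt[OF i] by simp
    moreover have "card S = k" using bij_betw_same_card[OF bij] by simp
    ultimately have "image_mset (\<lambda>t. tau t i) (mset_set S) = mset (take k (sorted_rtts n tau i))"
      using sum_rtts_eq_sum_list_take_imp_mset_eq[OF S(1)] by blast
    with S bij show ?thesis unfolding bij_betw_def by blast
  qed
  then have "\<forall>i\<in>nodes n. \<exists>S. S \<subseteq> nodes n \<and> i \<in> S \<and> sigma ` S = {1..k} \<and>
      image_mset (\<lambda>t. tau t i) (mset_set S) = mset (take k (sorted_rtts n tau i))"
    by blast
  then obtain S where S: "\<forall>i\<in>nodes n. S i \<subseteq> nodes n \<and> i \<in> S i \<and> sigma ` S i = {1..k} \<and>
      image_mset (\<lambda>t. tau t i) (mset_set (S i)) = mset (take k (sorted_rtts n tau i))"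
    by (rule bchoice[THEN exE])
  define G where "G i = S i - {i}" for i
  have closed: "insert i (G i) = S i" if "i \<in> nodes n" for i
    using S that by (auto simp: G_def)
  have "nn_graph n k tau G"
    unfolding nn_graph_iff[OF rtt k]
  proof (intro ballI conjI)
    fix i assume i: "i \<in> nodes n"
    show "G i \<subseteq> nodes n - {i}" using S i unfolding G_def by blast
    show "image_mset (\<lambda>t. tau t i) (mset_set (insert i (G i))) = mset (take k (sorted_rtts n tau i))"
      using S i unfolding closed[OF i] by blast
  qed
  moreover have "admissible n k sigma G"
    unfolding admissible_def decodable_def
  proof (intro ballI)
    fix i j assume "i \<in> nodes n" "j \<in> {1..k}"
    then have "j \<in> sigma ` ({i} \<union> G i)" using S closed by simp
    then show "\<exists>t\<in>{i} \<union> G i. sigma t = j" by auto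
  qed
  ultimately show ?thesis by blast
qed

theorem proposition3:
  fixes n k :: nat and tau :: "nat \<Rightarrow> nat \<Rightarrow> real" and sigma :: "nat \<Rightarrow> nat"
  assumes "1 \<le> k" and "k \<le> n"
    and "rtt_function n tau"
    and "uncoded_scheme n k sigma"
  shows "((\<exists>G. nn_graph n k tau G \<and> admissible n k sigma G) \<longrightarrow>
           L_avg n k tau sigma =
             (1 / (real k * real n)) * (\<Sum>i\<in>nodes n. \<Sum>j\<in>{0..k-1}. lambda_seq n tau i j))
       \<and> (((\<forall>i\<in>nodes n. L_max n k tau sigma i = lambda_seq n tau i (k - 1)) \<and>
            L_avg n k tau sigma =
             (1 / (real k * real n)) * (\<Sum>i\<in>nodes n. \<Sum>j\<in>{0..k-1}. lambda_seq n tau i j))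
          \<longrightarrow> (\<exists>G. nn_graph n k tau G \<and> admissible n k sigma G))"
proof -
  note k = assms(1,2) and rtt = assms(3) and unc = assms(4)
  define lat where "lat i = (\<Sum>j\<in>{1..k}. latency n tau sigma i j)" for i
  define opt where "opt i = sum_list (take k (sorted_rtts n tau i))" for i
  have opt_le_lat: "opt i \<le> lat i" if "i \<in> nodes n" for i
    unfolding opt_def lat_def by (rule sum_list_take_sorted_rtts_le_sum_latency[OF rtt unc that])
  have "(\<Sum>i\<in>nodes n. \<Sum>j\<in>{0..k-1}. lambda_seq n tau i j) = sum opt (nodes n)"
    unfolding opt_def sum_lambda_seq_eq_sum_list_take[OF k] ..
  then have "L_avg n k tau sigma =
      (1 / (real k * real n)) * (\<Sum>i\<in>nodes n. \<Sum>j\<in>{0..k-1}. lambda_seq n tau i j)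
      \<longleftrightarrow> sum opt (nodes n) = sum lat (nodes n)" (is "?avg \<longleftrightarrow> _")
    using k by (auto simp: L_avg_def lat_def)
  also have "\<dots> \<longleftrightarrow> (\<forall>i\<in>nodes n. lat i = opt i)"
    using sum_mono_inv[of opt "nodes n" lat] opt_le_lat by (force simp: nodes_def)
  finally have avg_iff: "?avg \<longleftrightarrow> (\<forall>i\<in>nodes n. lat i = opt i)" .
  show ?thesis
    using avg_iff sum_latency_eq_if_admissible_nn_graph[OF rtt unc k]
      admissible_nn_graph_if_sum_latency_eq[OF rtt unc k]
    unfolding lat_def opt_def by blast
qed

end
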